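(* In the setting below, let $\phi_1:=\phi/\|\phi\|$ with $\|\phi\|=\sqrt{|\gamma(\phi,\phi)|}$ be the unitary section of $\mathcal U^M$ obtained from $\phi$. Then the connection one-form $i_\epsilon\sum A_idz^i+i_\epsilon\sum A_{\bar i}d\bar z^i$ of the pull back connection on $\mathcal U^M$ with respect to $\phi_1$ (i.e. $\mathcal D_i\phi_1=i_\epsilon A_i\phi_1$, $\mathcal D_{\bar i}\phi_1=i_\epsilon A_{\bar i}\phi_1$) is given by $$A_i=\tfrac12A^h_i,\qquad A_{\bar i}=\tfrac12\overline{A^h_i},$$ where $i_\epsilon A^h_i=\gamma(\partial_i\phi,\phi)/\gamma(\phi,\phi)$.
   Context: Let $\epsilon\in\{-1,1\}$, $\mathbb{C}_\epsilon=\mathbb{R}[i_\epsilon]$, $i_\epsilon^2=\epsilon$, conjugation $\overline{a+i_\epsilon b}=a-i_\epsilon b$. $V=\mathbb{C}_\epsilon^{2n+2}$ with coordinates $(z^i,w_i)$, $\Omega=\sum dz^i\wedge dw_i$, $\gamma=i_\epsilon\Omega(\cdot,\bar\cdot)$ ($\epsilon$-Hermitian); $V'=\{\gamma(v,v)\neq0\}$; $P(V')$ the set of lines $\mathbb{C}_\epsilon v$, $v\in V'$; $\pi_V:V'\to P(V')$; $\mathcal U\subset P(V')\times V$ the universal line bundle with Chern connection $\mathcal D_Xv=$ $\gamma$-orthogonal projection onto $\mathcal U$ of $d_Xv$. Setting: $(M,J,g,\nabla,\xi)$ is a regular conical affine special $\epsilon$-K\"ahler manifold of real dimension $2n+2$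 (an $\epsilon$-K\"ahler manifold with parallel $g$-skew $J$, $J^2=\epsilon\mathrm{Id}$, flat torsion-free $\nabla$ with $\nabla\omega=0$ for $\omega=\epsilon g(J\cdot,\cdot)$ and $(\nabla_XJ)Y=(\nabla_YJ)X$, and a vector field $\xi$ with $\nabla\xi=D\xi=\mathrm{Id}$ for the Levi-Civita connection $D$; regular: $g(\xi,\xi)$ nowhere zero and the leaf space of $\mathrm{span}\{\xi,J\xi\}$ is a Hausdorff $\epsilon$-complex manifold onto which the quotient is a holomorphic submersion). $\phi:M\to V'$ is a conical $\epsilon$-K\"ahlerian Lagrangian holomorphic immersion inducing the special geometry (i.e. $\phi^*\gamma$ nondegenerate, $\phi^*\Omega=0$, position vector field of $V$ tangent along $\phi$, $g=\phi^*\mathrm{Re}\gamma$), regarded as a holomorphic section of $\mathcal U^M=(\pi_V\circ\phi)^*\mathcal U$ with the pull back connection $\mathcal D$ (defined by $(f^*\mathcal D)_Xf^*s=\mathcal D_{dfX}s$). $(z^i)$ are conical special holomorphic coordinates $z^i\circ\phi$, $\partial_i=\partial/\partial z^i$, $\partial_{\bar i}=\partial/\partial\bar z^i$, $\mathcal D_i=\mathcal D_{\partial_i}$, $\mathcal D_{\bar i}=\mathcal D_{\partial_{\bar i}}$. *)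

theory Defs
  imports "HOL-Analysis.Analysis"
begin

text \<open>The epsilon-complex numbers C_eps = R[i_eps], i_eps^2 = eps, represented as real pairs
  (a,b) standing for a + i_eps b.  The parameter e is eps.\<close>

type_synonym ec = "real \<times> real"

definition emul :: "real \<Rightarrow> ec \<Rightarrow> ec \<Rightarrow> ec" where
  "emul e x y = (fst x * fst y + e * snd x * snd y, fst x * snd y + snd x * fst y)"

definition ei :: ec where "ei = (0, 1)"

definition econj :: "ec \<Rightarrow> ec" where "econj x = (fst x, - snd x)"

definition einv :: "real \<Rightarrow> ec \<Rightarrow> ec" where
  "einv e x = (fst x / ((fst x)\<^sup>2 - e * (snd x)\<^sup>2), - snd x / ((fst x)\<^sup>2 - e * (snd x)\<^sup>2))"

definition ediv :: "real \<Rightarrow> ec \<Rightarrow> ec \<Rightarrow> ec" where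
  "ediv e x y = emul e x (einv e y)"

text \<open>C_eps-scalar multiplication on C_eps^('n) and on V = C_eps^('n) x C_eps^('n)
  (coordinates (z^i, w_i)), 'n an index type with CARD('n) = n+1.\<close>

definition escN :: "real \<Rightarrow> ec \<Rightarrow> ec^'n \<Rightarrow> ec^'n" where
  "escN e c v = (\<chi> j. emul e c (v $ j))"

definition escV :: "real \<Rightarrow> ec \<Rightarrow> ((ec^'n) \<times> (ec^'n)) \<Rightarrow> ((ec^'n) \<times> (ec^'n))" where
  "escV e c v = (escN e c (fst v), escN e c (snd v))"

definition conjV :: "((ec^'n) \<times> (ec^'n)) \<Rightarrow> ((ec^'n) \<times> (ec^'n))" where
  "conjV v = ((\<chi> j. econj (fst v $ j)), (\<chi> j. econj (snd v $ j)))"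

definition Omega :: "real \<Rightarrow> ((ec^'n) \<times> (ec^'n)) \<Rightarrow> ((ec^'n) \<times> (ec^'n)) \<Rightarrow> ec" where
  "Omega e u v = (\<Sum>j\<in>UNIV. emul e (fst u $ j) (snd v $ j) - emul e (snd u $ j) (fst v $ j))"

definition gam :: "real \<Rightarrow> ((ec^'n) \<times> (ec^'n)) \<Rightarrow> ((ec^'n) \<times> (ec^'n)) \<Rightarrow> ec" where
  "gam e u v = emul e ei (Omega e u (conjV v))"

text \<open>Wirtinger-type derivatives d/dz^i = 1/2 (d/dx^i + eps i_eps d/dy^i) and
  d/dzbar^i = 1/2 (d/dx^i - eps i_eps d/dy^i), where z^i = x^i + i_eps y^i.\<close>

definition dz :: "real \<Rightarrow> 'n \<Rightarrow> (ec^'n \<Rightarrow> (ec^'n) \<times> (ec^'n)) \<Rightarrow> ec^'n \<Rightarrow> (ec^'n) \<times> (ec^'n)" where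
  "dz e i f p = (1/2) *\<^sub>R (frechet_derivative f (at p) (axis i (1, 0))
       + escV e (0, e) (frechet_derivative f (at p) (axis i (0, 1))))"

definition dzbar :: "real \<Rightarrow> 'n \<Rightarrow> (ec^'n \<Rightarrow> (ec^'n) \<times> (ec^'n)) \<Rightarrow> ec^'n \<Rightarrow> (ec^'n) \<times> (ec^'n)" where
  "dzbar e i f p = (1/2) *\<^sub>R (frechet_derivative f (at p) (axis i (1, 0))
       - escV e (0, e) (frechet_derivative f (at p) (axis i (0, 1))))"

definition gproj :: "real \<Rightarrow> ((ec^'n) \<times> (ec^'n)) \<Rightarrow> ((ec^'n) \<times> (ec^'n)) \<Rightarrow> ((ec^'n) \<times> (ec^'n))" where
  "gproj e v u = escV e (ediv e (gam e u v) (gam e v v)) v"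

text \<open>Pull-back Chern connection on U^M, for a section s of U^M (s p in the line C_eps phi(p)),
  in direction d/dz^i resp. d/dzbar^i.\<close>

definition covD :: "real \<Rightarrow> (ec^'n \<Rightarrow> (ec^'n) \<times> (ec^'n)) \<Rightarrow> 'n \<Rightarrow> (ec^'n \<Rightarrow> (ec^'n) \<times> (ec^'n)) \<Rightarrow> ec^'n \<Rightarrow> (ec^'n) \<times> (ec^'n)" where
  "covD e phi i s p = gproj e (phi p) (dz e i s p)"

definition covDbar :: "real \<Rightarrow> (ec^'n \<Rightarrow> (ec^'n) \<times> (ec^'n)) \<Rightarrow> 'n \<Rightarrow> (ec^'n \<Rightarrow> (ec^'n) \<times> (ec^'n)) \<Rightarrow> ec^'n \<Rightarrow> (ec^'n) \<times> (ec^'n)" where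
  "covDbar e phi i s p = gproj e (phi p) (dzbar e i s p)"

definition gnorm :: "real \<Rightarrow> ((ec^'n) \<times> (ec^'n)) \<Rightarrow> real" where
  "gnorm e v = sqrt \<bar>fst (gam e v v)\<bar>"

definition unitsec :: "real \<Rightarrow> (ec^'n \<Rightarrow> (ec^'n) \<times> (ec^'n)) \<Rightarrow> ec^'n \<Rightarrow> (ec^'n) \<times> (ec^'n)" where
  "unitsec e phi p = (1 / gnorm e (phi p)) *\<^sub>R phi p"

text \<open>Local model of a conical eps-Kaehlerian Lagrangian holomorphic immersion, written in the
  conical special holomorphic coordinates z^i = z^i o phi on an open domain U.\<close>

definition conical_lagr_immersion ::
  "real \<Rightarrow> (ec^'n) set \<Rightarrow> (ec^'n \<Rightarrow> (ec^'n) \<times> (ec^'n)) \<Rightarrow> bool" where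
  "conical_lagr_immersion e U phi \<longleftrightarrow> open U \<and>
     (\<forall>p\<in>U. fst (phi p) = p \<and> gam e (phi p) (phi p) \<noteq> 0 \<and>
       (\<exists>L. (phi has_derivative L) (at p) \<and>
            (\<forall>v. L (escN e ei v) = escV e ei (L v)) \<and>
            inj L \<and>
            phi p \<in> range L \<and>
            (\<forall>v w. Omega e (L v) (L w) = 0) \<and>
            (\<forall>v. v \<noteq> 0 \<longrightarrow> (\<exists>w. fst (gam e (L v) (L w)) \<noteq> 0))))"

end

theory Submission
  imports Defs
begin

text \<open>Since $\gamma(\phi,\phi)$ is real, $\phi_1 = N\phi$ with $N = |\gamma(\phi,\phi)|^{-1/2}$ and
  $dN = -N\,d\gamma(\phi,\phi)/(2\gamma(\phi,\phi))$. Holomorphy of $\phi$ gives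
  $\partial_i\gamma(\phi,\phi) = \gamma(\partial_i\phi,\phi)$, $\partial_{\bar i}\phi = 0$ and
  $\partial_{\bar i}\gamma(\phi,\phi) = \overline{\gamma(\partial_i\phi,\phi)}$. Hence along $\partial_i$ the
  $dN$-term cancels half of the projection $N\gamma(\partial_i\phi,\phi)/\gamma(\phi,\phi)\,\phi$ of
  $N\partial_i\phi$, and along $\partial_{\bar i}$ only the $dN$-term, the conjugate half, survives.\<close>

lemma emul_scaleR_right: "emul e c (r *\<^sub>R x) = r *\<^sub>R emul e c x"
  by (simp add: emul_def algebra_simps)

lemma emul_real_right: "emul e c (g, 0) = g *\<^sub>R c"
  by (simp add: emul_def prod_eq_iff)

lemma emul_ei_cancel:
  assumes "e \<noteq> 0" and "emul e ei x = emul e ei y"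
  shows "x = y"
  using assms by (simp add: emul_def ei_def prod_eq_iff)

lemma fst_emul_ei: "fst (emul e ei x) = e * snd x"
  by (simp add: emul_def ei_def)

lemma econj_emul_ei: "econj (emul e ei x) = - emul e ei (econj x)"
  by (simp add: emul_def ei_def econj_def)

lemma econj_scaleR: "econj (r *\<^sub>R x) = r *\<^sub>R econj x"
  by (simp add: econj_def)

lemma ediv_real_right: "ediv e x (g, 0) = (1 / g) *\<^sub>R x"
  by (simp add: ediv_def einv_def emul_def power2_eq_square prod_eq_iff zero_prod_def)

lemma emul_sum_right: "emul e c (sum f A) = (\<Sum>j\<in>A. emul e c (f j))"
  by (simp add: emul_def prod_eq_iff fst_sum snd_sum sum_distrib_left sum.distrib algebra_simps)

lemma econj_sum: "econj (sum f A) = (\<Sum>j\<in>A. econj (f j))"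
  by (simp add: econj_def prod_eq_iff fst_sum snd_sum sum_negf)

lemma escV_scaleR: "escV e c (r *\<^sub>R u) = r *\<^sub>R escV e c u"
  by (auto simp: escV_def escN_def emul_def vec_eq_iff prod_eq_iff algebra_simps)

lemma escV_uminus_scalar: "escV e (- c) u = - escV e c u"
  by (auto simp: escV_def escN_def emul_def vec_eq_iff prod_eq_iff)

lemma escV_scaleR_scalar: "escV e (r *\<^sub>R c) u = r *\<^sub>R escV e c u"
  by (auto simp: escV_def escN_def emul_def vec_eq_iff prod_eq_iff algebra_simps)

lemma conjV_add: "conjV (u + v) = conjV u + conjV v"
  by (auto simp: conjV_def econj_def vec_eq_iff prod_eq_iff)

lemma conjV_scaleR: "conjV (r *\<^sub>R u) = r *\<^sub>R conjV u"
  by (auto simp: conjV_def econj_def vec_eq_iff prod_eq_iff)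

lemma conjV_conjV: "conjV (conjV u) = u"
  by (auto simp: conjV_def econj_def vec_eq_iff prod_eq_iff)

lemma Omega_escV_left: "Omega e (escV e c u) v = emul e c (Omega e u v)"
  unfolding Omega_def
  by (subst emul_sum_right) (auto intro!: sum.cong simp: escV_def escN_def emul_def algebra_simps)

lemma Omega_antisym: "Omega e u v = - Omega e v u"
  unfolding Omega_def
  by (subst sum_negf[symmetric]) (auto intro!: sum.cong simp: emul_def algebra_simps)

lemma Omega_add_left: "Omega e (u + w) v = Omega e u v + Omega e w v"
  unfolding Omega_def
  by (subst sum.distrib[symmetric]) (auto intro!: sum.cong simp: emul_def algebra_simps)

lemma Omega_scaleR_left: "Omega e (r *\<^sub>R u) v = r *\<^sub>R Omega e u v"
  unfolding Omega_def
  by (subst scaleR_sum_right) (auto intro!: sum.cong simp: emul_def algebra_simps)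

lemma econj_Omega: "econj (Omega e u v) = Omega e (conjV u) (conjV v)"
  unfolding Omega_def
  by (subst econj_sum) (auto intro!: sum.cong simp: econj_def conjV_def emul_def algebra_simps)

lemma gam_add_left: "gam e (u + w) v = gam e u v + gam e w v"
  by (simp add: gam_def Omega_add_left emul_def algebra_simps)

lemma gam_scaleR_left: "gam e (r *\<^sub>R u) v = r *\<^sub>R gam e u v"
  by (simp add: gam_def Omega_scaleR_left emul_def algebra_simps)

lemma gam_add_right: "gam e u (v + w) = gam e u v + gam e u w"
  by (simp add: gam_def conjV_add Omega_antisym[of e u] Omega_add_left emul_def algebra_simps)

lemma gam_scaleR_right: "gam e u (r *\<^sub>R v) = r *\<^sub>R gam e u v"
  by (simp add: gam_def conjV_scaleR Omega_antisym[of e u] Omega_scaleR_left emul_def algebra_simps)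

lemma gam_diff_left: "gam e (u - w) v = gam e u v - gam e w v"
  using gam_add_left[of e u "(-1) *\<^sub>R w" v] gam_scaleR_left[of e "-1" w v] by simp

lemma gam_uminus_left: "gam e (- u) v = - gam e u v"
  using gam_scaleR_left[of e "-1" u v] by simp

lemma gam_escV_left: "gam e (escV e c u) v = emul e c (gam e u v)"
  by (simp add: gam_def Omega_escV_left emul_def algebra_simps)

lemma gam_hermitian: "gam e v u = econj (gam e u v)"
proof -
  have "econj (gam e u v) = emul e (econj ei) (econj (Omega e u (conjV v)))"
    by (simp add: gam_def emul_def econj_def)
  also have "econj (Omega e u (conjV v)) = - Omega e v (conjV u)"
    by (simp add: econj_Omega conjV_conjV Omega_antisym[of e "conjV u"])
  finally show ?thesis
    by (auto simp: gam_def emul_def econj_def ei_def)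
qed

lemma gam_self_real: "gam e v v = (fst (gam e v v), 0)"
  using gam_hermitian[of e v v] by (simp add: econj_def prod_eq_iff)

lemma bounded_bilinear_gam: "bounded_bilinear (gam e)"
  unfolding bilinear_conv_bounded_bilinear[symmetric] bilinear_def
  by (intro conjI allI linearI) (simp_all add: gam_add_left gam_add_right gam_scaleR_left gam_scaleR_right)

lemma gam_unitsec_self:
  assumes "gam e (phi p) (phi p) = (g, 0)"
  shows "gam e (unitsec e phi p) (unitsec e phi p) = (sgn g, 0)"
proof -
  have "(1 / sqrt \<bar>g\<bar>) * (1 / sqrt \<bar>g\<bar>) * g = sgn g"
    by (cases "g = 0") (simp_all add: sgn_if abs_if field_simps)
  then show ?thesis
    using assms by (simp add: unitsec_def gnorm_def gam_scaleR_left gam_scaleR_right)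
qed

lemma escV_cancel_on_line:
  assumes "gam e v v = (g, 0)" and "g \<noteq> 0" and "escV e c v = escV e c' v"
  shows "c = c'"
proof -
  have "g *\<^sub>R c = g *\<^sub>R c'"
    using arg_cong[OF assms(3), of "\<lambda>u. gam e u v"]
    by (simp add: gam_escV_left assms(1) emul_real_right)
  then show ?thesis using assms(2) by simp
qed

lemma gproj_real:
  assumes "gam e v v = (g, 0)"
  shows "gproj e v u = escV e ((1 / g) *\<^sub>R gam e u v) v"
  by (simp add: gproj_def assms ediv_real_right)

lemma has_real_derivative_inverse_sqrt_abs:
  fixes x :: real
  assumes "x \<noteq> 0"
  shows "((\<lambda>y. 1 / sqrt \<bar>y\<bar>) has_real_derivative - (1 / sqrt \<bar>x\<bar>) / (2 * x)) (at x)"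
proof (cases "x > 0")
  case True
  have "((\<lambda>y. 1 / sqrt y) has_real_derivative - (1 / sqrt \<bar>x\<bar>) / (2 * x)) (at x)"
    using True by (auto intro!: derivative_eq_intros simp: field_simps)
  then show ?thesis
    by (rule has_field_derivative_transform_within_open[where S = "{0<..}"]) (use True in auto)
next
  case False
  with assms have "x < 0" by simp
  have "((\<lambda>y. 1 / sqrt (- y)) has_real_derivative - (1 / sqrt \<bar>x\<bar>) / (2 * x)) (at x)"
    using \<open>x < 0\<close> by (auto intro!: derivative_eq_intros simp: field_simps)
  then show ?thesis
    by (rule has_field_derivative_transform_within_open[where S = "{..<0}"]) (use \<open>x < 0\<close> in auto)
qed

lemma unitsec_has_derivative:
  assumes phi: "(phi has_derivative L) (at p)"
    and G: "gam e (phi p) (phi p) = (g, 0)" and "g \<noteq> 0"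
  shows "(unitsec e phi has_derivative
           (\<lambda>h. (1 / sqrt \<bar>g\<bar>) *\<^sub>R (L h - (fst (gam e (L h) (phi p)) / g) *\<^sub>R phi p))) (at p)"
proof -
  let ?N = "\<lambda>q. fst (gam e (phi q) (phi q))"
  have "(?N has_derivative (\<lambda>h. fst (gam e (phi p) (L h) + gam e (L h) (phi p)))) (at p)"
    by (rule bounded_linear.has_derivative[OF bounded_linear_fst
          bounded_bilinear.FDERIV[OF bounded_bilinear_gam phi phi]])
  then have dN: "(?N has_derivative (\<lambda>h. 2 * fst (gam e (L h) (phi p)))) (at p)"
    by (simp add: gam_hermitian[of e "phi p"] econj_def)
  have "((\<lambda>y. 1 / sqrt \<bar>y\<bar>) has_derivative (\<lambda>y. y * (- (1 / sqrt \<bar>g\<bar>) / (2 * g)))) (at g)"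
    using has_real_derivative_inverse_sqrt_abs[OF \<open>g \<noteq> 0\<close>] unfolding has_field_derivative_def
    by (rule has_derivative_eq_rhs) (simp add: fun_eq_iff)
  then have "((\<lambda>y. 1 / sqrt \<bar>y\<bar>) has_derivative (\<lambda>y. y * (- (1 / sqrt \<bar>g\<bar>) / (2 * g)))) (at (?N p))"
    by (simp add: G)
  from has_derivative_compose[OF dN this]
  have "((\<lambda>q. 1 / sqrt \<bar>?N q\<bar>) has_derivative
          (\<lambda>h. 2 * fst (gam e (L h) (phi p)) * (- (1 / sqrt \<bar>g\<bar>) / (2 * g)))) (at p)" .
  from has_derivative_scaleR[OF this phi] show ?thesis
    unfolding unitsec_def gnorm_def using G by (simp add: algebra_simps)
qed

lemma dz_has_derivative:
  assumes "(f has_derivative D) (at p)"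
  shows "dz e i f p = (1/2) *\<^sub>R (D (axis i (1, 0)) + escV e (0, e) (D (axis i (0, 1))))"
    and "dzbar e i f p = (1/2) *\<^sub>R (D (axis i (1, 0)) - escV e (0, e) (D (axis i (0, 1))))"
  using frechet_derivative_at[OF assms] by (simp_all add: dz_def dzbar_def)

lemma axis_ei: "axis i (0, 1) = escN e ei (axis i (1, 0))"
  by (auto simp: axis_def escN_def emul_def ei_def vec_eq_iff zero_prod_def)

lemma escV_ei_self: "e * e = 1 \<Longrightarrow> escV e (0, e) (escV e ei u) = u"
  by (auto simp: escV_def escN_def emul_def ei_def vec_eq_iff prod_eq_iff)

lemma dz_dzbar_holomorphic:
  assumes "(f has_derivative L) (at p)" and hol: "\<And>v. L (escN e ei v) = escV e ei (L v)"
    and "e * e = 1"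
  shows "dz e i f p = L (axis i (1, 0))" and "dzbar e i f p = 0"
  using dz_has_derivative[OF assms(1)] by (simp_all add: axis_ei[of i e] hol escV_ei_self assms(3))

lemma dz_dzbar_unitsec:
  fixes i :: "'n::finite"
  assumes phi: "(phi has_derivative L) (at p)"
    and hol: "\<And>v. L (escN e ei v) = escV e ei (L v)" and ee: "e * e = 1"
    and G: "gam e (phi p) (phi p) = (g, 0)" and "g \<noteq> 0"
  defines "\<Gamma> \<equiv> gam e (dz e i phi p) (phi p)"
  shows "dz e i (unitsec e phi) p
           = (1 / sqrt \<bar>g\<bar>) *\<^sub>R (dz e i phi p - escV e ((1 / (2 * g)) *\<^sub>R \<Gamma>) (phi p))"
    and "dzbar e i (unitsec e phi) p
           = - (1 / sqrt \<bar>g\<bar>) *\<^sub>R escV e ((1 / (2 * g)) *\<^sub>R econj \<Gamma>) (phi p)"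
proof -
  define a :: "ec^'n" where "a = axis i (1, 0)"
  have dz_phi: "dz e i phi p = L a"
    unfolding a_def by (rule dz_dzbar_holomorphic(1)[OF phi hol ee])
  have ee': "e * (e * x) = x" for x
    using ee by (simp add: mult.assoc[symmetric])
  have La: "L (axis i (0, 1)) = escV e ei (L a)"
    by (simp add: a_def axis_ei[of i e] hol)
  have Ga: "gam e (L a) (phi p) = \<Gamma>"
    by (simp add: \<Gamma>_def dz_phi)
  have Gb: "fst (gam e (escV e ei (L a)) (phi p)) = e * snd \<Gamma>"
    by (simp add: Ga gam_escV_left fst_emul_ei)
  note dz_us = dz_has_derivative[OF unitsec_has_derivative[OF phi G \<open>g \<noteq> 0\<close>], of e i]
  show "dz e i (unitsec e phi) p
           = (1 / sqrt \<bar>g\<bar>) *\<^sub>R (dz e i phi p - escV e ((1 / (2 * g)) *\<^sub>R \<Gamma>) (phi p))"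
    unfolding dz_us(1) dz_phi
    by (simp only: La Ga Gb flip: a_def)
      (auto simp: escV_def escN_def emul_def ei_def vec_eq_iff prod_eq_iff algebra_simps ee')
  show "dzbar e i (unitsec e phi) p
           = - (1 / sqrt \<bar>g\<bar>) *\<^sub>R escV e ((1 / (2 * g)) *\<^sub>R econj \<Gamma>) (phi p)"
    unfolding dz_us(2)
    by (simp only: La Ga Gb flip: a_def)
      (auto simp: escV_def escN_def emul_def ei_def econj_def vec_eq_iff prod_eq_iff algebra_simps ee')
qed

lemma covD_covDbar_unitsec:
  fixes i :: "'n::finite"
  assumes phi: "(phi has_derivative L) (at p)"
    and hol: "\<And>v. L (escN e ei v) = escV e ei (L v)" and ee: "e * e = 1"
    and G: "gam e (phi p) (phi p) = (g, 0)" and "g \<noteq> 0"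
    and Ah: "emul e ei Ah = (1 / g) *\<^sub>R gam e (dz e i phi p) (phi p)"
  shows "covD e phi i (unitsec e phi) p = escV e (emul e ei ((1/2) *\<^sub>R Ah)) (unitsec e phi p)"
    and "covDbar e phi i (unitsec e phi) p
           = escV e (emul e ei ((1/2) *\<^sub>R econj Ah)) (unitsec e phi p)"
proof -
  define \<Gamma> where "\<Gamma> = gam e (dz e i phi p) (phi p)"
  note dz = dz_dzbar_unitsec[OF assms(1-5), of i, folded \<Gamma>_def]
  have us: "unitsec e phi p = (1 / sqrt \<bar>g\<bar>) *\<^sub>R phi p"
    by (simp add: unitsec_def gnorm_def G)
  have half: "x - (1/2) *\<^sub>R x = (1/2) *\<^sub>R x" for x :: ec
    by (simp add: prod_eq_iff)
  have "covD e phi i (unitsec e phi) p = escV e ((1 / (2 * g)) *\<^sub>R \<Gamma>) (unitsec e phi p)"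
    unfolding covD_def gproj_real[OF G] dz(1) us
    using \<open>g \<noteq> 0\<close>
    by (simp add: gam_scaleR_left gam_diff_left gam_escV_left G emul_real_right escV_scaleR
        \<Gamma>_def[symmetric] flip: scaleR_left_diff_distrib)
      (simp add: escV_scaleR_scalar half)
  also have "(1 / (2 * g)) *\<^sub>R \<Gamma> = emul e ei ((1/2) *\<^sub>R Ah)"
    by (simp add: emul_scaleR_right Ah \<Gamma>_def)
  finally show "covD e phi i (unitsec e phi) p = escV e (emul e ei ((1/2) *\<^sub>R Ah)) (unitsec e phi p)" .
  have "covDbar e phi i (unitsec e phi) p
          = escV e (- (1 / (2 * g)) *\<^sub>R econj \<Gamma>) (unitsec e phi p)"
    unfolding covDbar_def gproj_real[OF G] dz(2) us
    using \<open>g \<noteq> 0\<close>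
    by (simp add: gam_uminus_left gam_scaleR_left gam_escV_left G emul_real_right escV_scaleR
        escV_scaleR_scalar escV_uminus_scalar)
  also have "- (1 / (2 * g)) *\<^sub>R econj \<Gamma> = - (1/2) *\<^sub>R econj (emul e ei Ah)"
    by (simp add: Ah \<Gamma>_def econj_scaleR)
  also have "\<dots> = emul e ei ((1/2) *\<^sub>R econj Ah)"
    by (simp add: econj_emul_ei emul_scaleR_right)
  finally show "covDbar e phi i (unitsec e phi) p
           = escV e (emul e ei ((1/2) *\<^sub>R econj Ah)) (unitsec e phi p)" .
qed

lemma escV_emul_ei_cancel_on_line:
  assumes "gam e v v = (c, 0)" and "c \<noteq> 0" and "e \<noteq> 0"
    and "escV e (emul e ei x) v = escV e (emul e ei y) v"
  shows "x = y"
  using emul_ei_cancel[OF \<open>e \<noteq> 0\<close> escV_cancel_on_line[OF assms(1,2,4)]] .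

theorem mainTheorem9:
  fixes e :: real and U :: "(ec^'n) set" and phi :: "ec^'n \<Rightarrow> (ec^'n) \<times> (ec^'n)"
    and i :: 'n and p :: "ec^'n" and A Abar Ah :: ec
  assumes "e = -1 \<or> e = 1"
    and "conical_lagr_immersion e U phi"
    and "p \<in> U"
    and "covD e phi i (unitsec e phi) p = escV e (emul e ei A) (unitsec e phi p)"
    and "covDbar e phi i (unitsec e phi) p = escV e (emul e ei Abar) (unitsec e phi p)"
    and "emul e ei Ah = ediv e (gam e (dz e i phi p) (phi p)) (gam e (phi p) (phi p))"
  shows "A = (1/2) *\<^sub>R Ah \<and> Abar = (1/2) *\<^sub>R econj Ah"
proof -
  have ee: "e * e = 1" and "e \<noteq> 0"
    using assms(1) by auto
  obtain L where phi: "(phi has_derivative L) (at p)"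
    and hol: "\<And>v. L (escN e ei v) = escV e ei (L v)" and "gam e (phi p) (phi p) \<noteq> 0"
    using assms(2,3) unfolding conical_lagr_immersion_def by blast
  define g where "g = fst (gam e (phi p) (phi p))"
  have G: "gam e (phi p) (phi p) = (g, 0)"
    unfolding g_def by (rule gam_self_real)
  with \<open>gam e (phi p) (phi p) \<noteq> 0\<close> have "g \<noteq> 0"
    by (auto simp: zero_prod_def)
  have Ah: "emul e ei Ah = (1 / g) *\<^sub>R gam e (dz e i phi p) (phi p)"
    using assms(6) by (simp add: G ediv_real_right)
  note connection = covD_covDbar_unitsec[OF phi hol ee G \<open>g \<noteq> 0\<close> Ah]
  have G1: "gam e (unitsec e phi p) (unitsec e phi p) = (sgn g, 0)" and "sgn g \<noteq> 0"
    using gam_unitsec_self[of e phi p, OF G] \<open>g \<noteq> 0\<close> by (simp_all add: sgn_if)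
  show ?thesis
    using escV_emul_ei_cancel_on_line[OF G1 \<open>sgn g \<noteq> 0\<close> \<open>e \<noteq> 0\<close>] assms(4,5) connection
    by metis
qed

end
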